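(* Let $\mathcal{Q}=\mathcal{Q}_\ell(T,X,Y)$ and let $\alpha\in\mathcal{Q}$. Then the $H^{\mathcal{P}}$-canonical form of $\alpha$ (in $\mathcal{P}_\ell(T,X)$) is a product of elements of $H^{\mathcal{Q}}$. Moreover, $H^{\mathcal{P}}\cap\mathcal{Q}=H^{\mathcal{Q}}$ and $X\cap\mathcal{Q}=Y$.
   Context: Let $T$ be a monoid, $X$ a semilattice with identity $1_X$ (ordered by $e\le f$ iff $ef=e$) with an order-preserving left action of $T$. $\mathcal{P}_\ell(T,X)$: let $T*X$ be the semigroup free product acting on $X$ (elements of $X$ act by multiplication), $\omega^+=\omega\cdot1_X$, $\sim$ the semigroup congruence generated by $\{(\alpha^+\alpha,\alpha)\}\cup\{(1_T,1_X)\}$, and $\mathcal{P}_\ell(T,X)=(T*X)/\sim$ with $[\alpha]^+=[\alpha^+]$; $X$, $T$ are identified with their injective images. It is a left Ehresmann monoid with projections $X$, unique $T$-normal forms $t_0e_1t_1\cdots e_nt_n$ ($n\ge0$, $e_i\in X\setminus\{1\}$, $t_1,\dots,t_{n-1}\in T\setminus\{1\}$, $e_i<(t_ie_{i+1}\cdots e_nt_n)^+$), and unary operation $a^*=e_n$ if $n\ge1$, $t_n=1$, and $a^*=1$ otherwise. $H^{\mathcal{P}}=\{te:t\in T,e\in X\}$; every element of $\mathcal{P}_\ell(T,X)$ has a unique $H^{\mathcal{P}}$-canonical form, i.e. expression $h_1\cdots h_n$, $h_i\in H^{\mathcal{P}}$, with $h_i^*<h_{i+1}^+$ ($1\le i<n$)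 and $h_i\notin X$ ($2\le i\le n$). Let $Y$ be a subsemilattice of $X$ having an identity, satisfying (A): for all $t\in T$, $e,f\in Y$ with $e\le f$, $t\cdot f\in Y$ implies $t\cdot e\in Y$; (B): for all $t\in T$ there is $g\in Y$ with $t\cdot g\in Y$. $H^{\mathcal{Q}}=\{te:t\in T,e\in Y,t\cdot e\in Y\}$, and $\mathcal{Q}_\ell(T,X,Y)$ is the subsemigroup of $\mathcal{P}_\ell(T,X)$ generated by $H^{\mathcal{Q}}$. *)

theory Defs
  imports Main
begin

(* T is the type 't (a monoid, class monoid_mult);
   X is the type 'x, a meet-semilattice with identity top = 1_X; the product ef in X
   is e \<sqinter> f, so e \<le> f iff ef = e.
   act :: 't \<Rightarrow> 'x \<Rightarrow> 'x is the order-preserving left action of T on X. *)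

definition is_action :: "('t::monoid_mult \<Rightarrow> 'x::bounded_semilattice_inf_top \<Rightarrow> 'x) \<Rightarrow> bool" where
  "is_action act \<longleftrightarrow> (\<forall>e. act 1 e = e) \<and> (\<forall>s t e. act (s * t) e = act s (act t e))
     \<and> (\<forall>t e f. e \<le> f \<longrightarrow> act t e \<le> act t f)"

(* Words over the disjoint union T + X: elements of the free semigroup; the semigroup free
   product T*X is its quotient by the relations [s][t] = [st] (s,t in T) and [e][f] = [ef]
   (e,f in X).  These relations are included in the congruence below, so P_l(T,X) is the
   quotient of nonempty words by pcong. *)
type_synonym ('t,'x) word = "('t + 'x) list"

fun actw :: "('t \<Rightarrow> 'x::bounded_semilattice_inf_top \<Rightarrow> 'x) \<Rightarrow> ('t,'x) word \<Rightarrow> 'x \<Rightarrow> 'x" where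
  "actw act [] x = x"
| "actw act (Inl t # w) x = act t (actw act w x)"
| "actw act (Inr e # w) x = inf e (actw act w x)"

definition wplus :: "('t \<Rightarrow> 'x::bounded_semilattice_inf_top \<Rightarrow> 'x) \<Rightarrow> ('t,'x) word \<Rightarrow> 'x" where
  "wplus act w = actw act w top"

inductive pcong :: "('t::monoid_mult \<Rightarrow> 'x::bounded_semilattice_inf_top \<Rightarrow> 'x) \<Rightarrow> ('t,'x) word \<Rightarrow> ('t,'x) word \<Rightarrow> bool"
  for act where
  fpT: "pcong act [Inl s, Inl t] [Inl (s * t)]"
| fpX: "pcong act [Inr e, Inr f] [Inr (inf e f)]"
| plus: "w \<noteq> [] \<Longrightarrow> pcong act (Inr (wplus act w) # w) w"
| one: "pcong act [Inl 1] [Inr top]"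
| refl: "pcong act w w"
| sym: "pcong act u v \<Longrightarrow> pcong act v u"
| trans: "pcong act u v \<Longrightarrow> pcong act v w \<Longrightarrow> pcong act u w"
| left: "pcong act u v \<Longrightarrow> pcong act (x @ u) (x @ v)"
| right: "pcong act u v \<Longrightarrow> pcong act (u @ x) (v @ x)"

definition hP :: "'t \<times> 'x \<Rightarrow> ('t,'x) word" where
  "hP h = [Inl (fst h), Inr (snd h)]"

(* T-normal forms t_0 e_1 t_1 ... e_n t_n, represented as (t_0, [(e_1,t_1),...,(e_n,t_n)]) *)
definition nfword :: "'t \<Rightarrow> ('x \<times> 't) list \<Rightarrow> ('t,'x) word" where
  "nfword t0 xs = Inl t0 # concat (map (\<lambda>(e,t). [Inr e, Inl t]) xs)"

definition is_Tnf :: "('t::monoid_mult \<Rightarrow> 'x::bounded_semilattice_inf_top \<Rightarrow> 'x) \<Rightarrow> 't \<times> ('x \<times> 't) list \<Rightarrow> bool" where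
  "is_Tnf act nf \<longleftrightarrow> (let xs = snd nf in
     (\<forall>j < length xs. fst (xs ! j) \<noteq> top) \<and>
     (\<forall>j. j + 1 < length xs \<longrightarrow> snd (xs ! j) \<noteq> 1) \<and>
     (\<forall>j < length xs. fst (xs ! j) < wplus act (nfword (snd (xs ! j)) (drop (Suc j) xs))))"

definition pstar :: "('t::monoid_mult \<Rightarrow> 'x::bounded_semilattice_inf_top \<Rightarrow> 'x) \<Rightarrow> ('t,'x) word \<Rightarrow> 'x" where
  "pstar act w = (let nf = (SOME nf. is_Tnf act nf \<and> pcong act (nfword (fst nf) (snd nf)) w);
                      xs = snd nf in
     if xs \<noteq> [] \<and> snd (last xs) = 1 then fst (last xs) else top)"

definition is_HPcanon :: "('t::monoid_mult \<Rightarrow> 'x::bounded_semilattice_inf_top \<Rightarrow> 'x) \<Rightarrow> ('t,'x) word \<Rightarrow> ('t \<times> 'x) list \<Rightarrow> bool" where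
  "is_HPcanon act w hs \<longleftrightarrow> hs \<noteq> [] \<and> pcong act (concat (map hP hs)) w \<and>
     (\<forall>i. i + 1 < length hs \<longrightarrow> pstar act (hP (hs ! i)) < wplus act (hP (hs ! (i + 1)))) \<and>
     (\<forall>i. 1 \<le> i \<and> i < length hs \<longrightarrow> \<not> (\<exists>f. pcong act (hP (hs ! i)) [Inr f]))"

definition good_Y :: "('t::monoid_mult \<Rightarrow> 'x::bounded_semilattice_inf_top \<Rightarrow> 'x) \<Rightarrow> 'x set \<Rightarrow> bool" where
  "good_Y act Y \<longleftrightarrow> (\<forall>e\<in>Y. \<forall>f\<in>Y. inf e f \<in> Y) \<and> (\<exists>u\<in>Y. \<forall>y\<in>Y. inf u y = y) \<and>
     (\<forall>t. \<forall>e\<in>Y. \<forall>f\<in>Y. e \<le> f \<longrightarrow> act t f \<in> Y \<longrightarrow> act t e \<in> Y) \<and>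
     (\<forall>t. \<exists>g\<in>Y. act t g \<in> Y)"

definition inHQ :: "('t::monoid_mult \<Rightarrow> 'x::bounded_semilattice_inf_top \<Rightarrow> 'x) \<Rightarrow> 'x set \<Rightarrow> ('t,'x) word \<Rightarrow> bool" where
  "inHQ act Y w \<longleftrightarrow> (\<exists>t e. e \<in> Y \<and> act t e \<in> Y \<and> pcong act w (hP (t, e)))"

definition inQ :: "('t::monoid_mult \<Rightarrow> 'x::bounded_semilattice_inf_top \<Rightarrow> 'x) \<Rightarrow> 'x set \<Rightarrow> ('t,'x) word \<Rightarrow> bool" where
  "inQ act Y w \<longleftrightarrow> (\<exists>ps. ps \<noteq> [] \<and> (\<forall>(t,e)\<in>set ps. e \<in> Y \<and> act t e \<in> Y) \<and>
                         pcong act w (concat (map hP ps)))"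

end

theory Submission
  imports Defs
begin

text \<open>
  A word is reduced to its T-normal form by multiplying its letters, from right to left, into a
  T-normal form; this computation respects the defining congruence, hence computes the unique
  T-normal form of every element.  The T-normal form of an \<open>H\<^sup>P\<close>-canonical form
  \<open>(t\<^sub>1 e\<^sub>1) \<cdots> (t\<^sub>n e\<^sub>n)\<close> is \<open>t\<^sub>1 e\<^sub>1 t\<^sub>2 \<cdots> e\<^sub>n\<close>, so the
  canonical factors can be read off the normal form.  For a product of elements of \<open>H\<^sup>Q\<close>,
  every factor \<open>t\<^sub>i e\<^sub>i\<close> read off in this way again lies in \<open>H\<^sup>Q\<close>: multiplying a normal form
  on the left by \<open>t e \<in> H\<^sup>Q\<close> only meets \<open>e\<close> with a projection of Y, and condition (A)
  keeps the translate by \<open>t\<close> inside Y.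
\<close>

declare pcong.trans [trans]

lemma nfword_Nil [simp]: "nfword t [] = [Inl t]"
  by (simp add: nfword_def)

lemma nfword_Cons [simp]: "nfword t ((e, u) # xs) = Inl t # Inr e # nfword u xs"
  by (simp add: nfword_def)

lemma is_Tnf_Cons:
  "is_Tnf act (t0, (e, u) # xs) \<longleftrightarrow>
     e \<noteq> top \<and> (xs \<noteq> [] \<longrightarrow> u \<noteq> 1) \<and> e < wplus act (nfword u xs) \<and> is_Tnf act (u, xs)"
  unfolding is_Tnf_def Let_def snd_conv by (auto simp: All_less_Suc2 nth_Cons split: nat.splits)

lemma wplus_hP [simp]: "wplus act (hP (t, e)) = act t e"
  by (simp add: wplus_def hP_def)

lemma pcong_hP_one: "pcong act (hP (1, e)) [Inr e]"
proof -
  have "pcong act [Inl 1, Inr e] [Inr top, Inr e]"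
    using pcong.right[OF pcong.one, of act "[Inr e]"] by simp
  also have "pcong act [Inr top, Inr e] [Inr (inf top e)]"
    by (rule pcong.fpX)
  finally show ?thesis by (simp add: hP_def)
qed

lemma successively_if_nth:
  "(\<And>i. i + 1 < length xs \<Longrightarrow> R (xs ! i) (xs ! (i + 1))) \<Longrightarrow> successively R xs"
proof (induction R xs rule: successively.induct)
  case (3 R x y xs)
  show ?case using "3.prems"[of 0] "3.IH" "3.prems"[of "Suc _"] by auto
qed simp_all

locale order_action =
  fixes act :: "'t::monoid_mult \<Rightarrow> 'x::bounded_semilattice_inf_top \<Rightarrow> 'x"
  assumes is_action: "is_action act"
begin

lemma act_one [simp]: "act 1 e = e"
  using is_action by (simp add: is_action_def)

lemma act_mult: "act (s * t) e = act s (act t e)"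
  using is_action by (simp add: is_action_def)

lemma act_mono: "e \<le> f \<Longrightarrow> act t e \<le> act t f"
  using is_action by (simp add: is_action_def)

lemma actw_mono: "x \<le> y \<Longrightarrow> actw act w x \<le> actw act w y"
proof (induction w arbitrary: x y)
  case (Cons a w)
  then show ?case by (cases a) (auto intro: act_mono le_infI2)
qed simp

definition nf_plus :: "'t \<times> ('x \<times> 't) list \<Rightarrow> 'x" where
  "nf_plus n = wplus act (nfword (fst n) (snd n))"

lemma nf_plus_Nil [simp]: "nf_plus (t, []) = act t top"
  by (simp add: nf_plus_def wplus_def)

lemma nf_plus_Cons [simp]: "nf_plus (t, (e, u) # xs) = act t (inf e (nf_plus (u, xs)))"
  by (simp add: nf_plus_def wplus_def)

fun reduced :: "('x \<times> 't) list \<Rightarrow> bool" where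
  "reduced [] = True"
| "reduced ((e, u) # xs) \<longleftrightarrow> (xs \<noteq> [] \<longrightarrow> u \<noteq> 1) \<and> e < nf_plus (u, xs) \<and> reduced xs"

lemma is_Tnf_iff_reduced: "is_Tnf act (t0, xs) \<longleftrightarrow> reduced xs"
proof (induction xs arbitrary: t0)
  case (Cons a xs)
  obtain e u where "a = (e, u)" by fastforce
  moreover have "e < nf_plus (u, xs) \<Longrightarrow> e \<noteq> top"
    using top_greatest less_le_not_le by blast
  ultimately show ?case using Cons.IH by (auto simp: is_Tnf_Cons nf_plus_def)
qed (simp add: is_Tnf_def)

lemma nf_plus_reduced_Cons: "reduced ((e, u) # xs) \<Longrightarrow> nf_plus (t, (e, u) # xs) = act t e"
  by (simp add: inf.absorb1 less_imp_le)

text \<open>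
  Since \<open>\<alpha> = \<alpha>\<^sup>+ \<alpha>\<close>, prepending \<open>e\<close> to \<open>t\<^sub>0 e\<^sub>1 t\<^sub>1 \<cdots>\<close> gives \<open>(e p) t\<^sub>0 e\<^sub>1 t\<^sub>1 \<cdots>\<close> with \<open>p\<close> the \<open>+\<close> of the
  normal form; the new projection disappears if \<open>p \<le> e\<close> and is merged into
  \<open>e\<^sub>1 = p\<close> if \<open>t\<^sub>0 = 1\<close>.
\<close>
fun nf_cons :: "'t + 'x \<Rightarrow> 't \<times> ('x \<times> 't) list \<Rightarrow> 't \<times> ('x \<times> 't) list" where
  "nf_cons (Inl s) (t0, xs) = (s * t0, xs)"
| "nf_cons (Inr e) (t0, xs) =
     (let p = nf_plus (t0, xs); e' = inf e p in
      if e' = p then (t0, xs)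
      else if t0 = 1 \<and> xs \<noteq> [] then (1, (e', snd (hd xs)) # tl xs)
      else (1, (e', t0) # xs))"

lemma nf_cons_Inr_reduced:
  assumes red: "reduced xs"
  shows "reduced (snd (nf_cons (Inr e) (t0, xs)))
    \<and> nf_plus (nf_cons (Inr e) (t0, xs)) = inf e (nf_plus (t0, xs))"
proof -
  define p where "p = nf_plus (t0, xs)"
  show ?thesis
  proof (cases "inf e p = p")
    case True
    then show ?thesis using red by (simp add: p_def Let_def)
  next
    case False
    then have lt: "inf e p < p" by (simp add: less_le)
    show ?thesis
    proof (cases "t0 = 1 \<and> xs \<noteq> []")
      case True
      then obtain e1 u1 r where xs: "xs = (e1, u1) # r" and t0: "t0 = 1"
        by (metis list.exhaust surj_pair)
      have p: "p = e1" using red nf_plus_reduced_Cons[of e1 u1 r 1] by (simp add: p_def xs t0)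
      have "inf e e1 < nf_plus (u1, r)" using red xs by (meson inf_le2 reduced.simps(2) le_less_trans)
      then have "nf_plus (1, (inf e e1, u1) # r) = inf e e1" by (simp add: inf.absorb1 less_imp_le)
      then show ?thesis using False red p \<open>inf e e1 < nf_plus (u1, r)\<close>
        by (simp add: xs t0 p_def Let_def del: nf_plus_Cons)
    next
      case t0: False
      have "reduced ((inf e p, t0) # xs)" using red lt t0 by (auto simp: p_def)
      moreover have "nf_plus (1, (inf e p, t0) # xs) = inf e p"
        using nf_plus_reduced_Cons[OF calculation, of 1] by simp
      ultimately show ?thesis using False t0
        by (auto simp: p_def Let_def simp del: nf_plus_Cons)
    qed
  qed
qed

lemma reduced_foldr_nf_cons:
  assumes "reduced (snd n)"
  shows "reduced (snd (foldr nf_cons w n)) \<and> nf_plus (foldr nf_cons w n) = actw act w (nf_plus n)"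
proof (induction w)
  case (Cons a w)
  obtain t0 xs where n': "foldr nf_cons w n = (t0, xs)" by fastforce
  show ?case
  proof (cases a)
    case (Inl s)
    then show ?thesis using Cons n' by (cases xs) (auto simp: act_mult)
  next
    case (Inr e)
    then show ?thesis using Cons n' nf_cons_Inr_reduced[of xs e t0] by simp
  qed
qed (use assms in simp)

lemma nf_cons_inf:
  assumes red: "reduced xs"
  shows "nf_cons (Inr e) (nf_cons (Inr f) (t0, xs)) = nf_cons (Inr (inf e f)) (t0, xs)"
proof -
  define p where "p = nf_plus (t0, xs)"
  show ?thesis
  proof (cases "inf f p = p")
    case True
    then have "inf (inf e f) p = inf e p" by (metis inf.assoc inf.commute)
    then show ?thesis using True by (simp add: p_def[symmetric] Let_def del: nf_plus_Cons)
  next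
    case False
    have ne: "inf (inf e f) p \<noteq> p"
      using False by (metis inf.absorb_iff2 inf.coboundedI2 inf_le2 inf_commute antisym)
    obtain t' xs' where f: "nf_cons (Inr f) (t0, xs) = (1, (inf f p, t') # xs')"
      and ef: "nf_cons (Inr (inf e f)) (t0, xs) = (1, (inf (inf e f) p, t') # xs')"
      using False ne by (cases "t0 = 1 \<and> xs \<noteq> []") (auto simp: p_def Let_def simp del: nf_plus_Cons)
    have "nf_plus (1, (inf f p, t') # xs') = inf f p"
      using nf_cons_Inr_reduced[OF red, of f t0] f by (simp add: p_def del: nf_plus_Cons)
    then show ?thesis unfolding f ef by (simp add: Let_def inf.assoc del: nf_plus_Cons)
  qed
qed

lemma nf_cons_wplus:
  assumes "reduced (snd n)"
  shows "nf_cons (Inr (wplus act w)) (foldr nf_cons w n) = foldr nf_cons w n"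
proof -
  obtain t0 xs where n': "foldr nf_cons w n = (t0, xs)" by fastforce
  have "nf_plus (t0, xs) = actw act w (nf_plus n)"
    using reduced_foldr_nf_cons[OF assms, of w] n' by simp
  also have "\<dots> \<le> wplus act w" unfolding wplus_def by (rule actw_mono) simp
  finally show ?thesis using n' by (simp add: Let_def inf.absorb2 del: nf_plus_Cons)
qed

lemma foldr_nf_cons_pcong:
  "pcong act u v \<Longrightarrow> reduced (snd n) \<Longrightarrow> foldr nf_cons u n = foldr nf_cons v n"
proof (induction arbitrary: n rule: pcong.induct)
  case (fpT s t)
  then show ?case by (cases n) (simp add: mult.assoc)
next
  case (fpX e f)
  then show ?case by (cases n) (simp add: nf_cons_inf del: nf_cons.simps)
next
  case (plus w)
  then show ?case using nf_cons_wplus by simp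
next
  case one
  then show ?case by (cases n) (simp add: Let_def del: nf_plus_Cons)
next
  case (right u v x)
  then show ?case using reduced_foldr_nf_cons by simp
qed auto

definition nf_of :: "('t, 'x) word \<Rightarrow> 't \<times> ('x \<times> 't) list" where
  "nf_of w = foldr nf_cons w (1, [])"

lemma reduced_nf_of: "reduced (snd (nf_of w))"
  using reduced_foldr_nf_cons[of "(1, [])" w] by (simp add: nf_of_def)

lemma nf_of_pcong: "pcong act u v \<Longrightarrow> nf_of u = nf_of v"
  unfolding nf_of_def by (rule foldr_nf_cons_pcong) simp_all

lemma nf_of_nfword: "reduced xs \<Longrightarrow> nf_of (nfword t0 xs) = (t0, xs)"
proof (induction xs arbitrary: t0)
  case (Cons a xs)
  obtain e u where a: "a = (e, u)" by fastforce
  have lt: "e < nf_plus (u, xs)" using Cons.prems a by simp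
  then have "inf e (nf_plus (u, xs)) = e" by (simp add: inf.absorb1 less_imp_le)
  then show ?case using Cons a lt
    by (auto simp: nf_of_def Let_def simp del: nf_plus_Cons)
qed (simp add: nf_of_def)

lemma is_Tnf_unique: "is_Tnf act nf \<Longrightarrow> pcong act (nfword (fst nf) (snd nf)) w \<Longrightarrow> nf = nf_of w"
  using nf_of_nfword[of "snd nf" "fst nf"] nf_of_pcong is_Tnf_iff_reduced[of "fst nf" "snd nf"]
  by auto

definition hP_nf :: "'t \<Rightarrow> 'x \<Rightarrow> 't \<times> ('x \<times> 't) list" where
  "hP_nf t e = (t, if e = top then [] else [(e, 1)])"

lemma nf_of_hP: "nf_of (hP (t, e)) = hP_nf t e"
  by (simp add: nf_of_def hP_def hP_nf_def Let_def)

lemma pcong_nfword_hP_nf: "pcong act (nfword (fst (hP_nf t e)) (snd (hP_nf t e))) (hP (t, e))"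
proof (cases "e = top")
  case True
  have "pcong act [Inl t] [Inl t, Inl 1]"
    using pcong.fpT[of act t 1] by (simp add: pcong.sym)
  also have "pcong act [Inl t, Inl 1] [Inl t, Inr top]"
    using pcong.left[OF pcong.one, of act "[Inl t]"] by simp
  finally show ?thesis using True by (simp add: hP_nf_def hP_def)
next
  case False
  have "pcong act [Inl t, Inr e, Inl 1] [Inl t, Inr e, Inr top]"
    using pcong.left[OF pcong.one, of act "[Inl t, Inr e]"] by simp
  also have "pcong act [Inl t, Inr e, Inr top] [Inl t, Inr e]"
    using pcong.left[OF pcong.fpX, of act "[Inl t]" e top] by simp
  finally show ?thesis using False by (simp add: hP_nf_def hP_def)
qed

lemma pstar_hP: "pstar act (hP (t, e)) = e"
proof -
  let ?P = "\<lambda>nf. is_Tnf act nf \<and> pcong act (nfword (fst nf) (snd nf)) (hP (t, e))"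
  have "is_Tnf act (hP_nf t e)"
    by (simp add: hP_nf_def is_Tnf_iff_reduced top.not_eq_extremum)
  then have "?P (hP_nf t e)" using pcong_nfword_hP_nf by blast
  then have "?P (SOME nf. ?P nf)" by (rule someI)
  then have "(SOME nf. ?P nf) = nf_of (hP (t, e))"
    using is_Tnf_unique by blast
  then have "(SOME nf. ?P nf) = hP_nf t e"
    by (simp only: nf_of_hP)
  then show ?thesis unfolding pstar_def by (simp add: hP_nf_def Let_def)
qed

definition canon_adjacent :: "'t \<times> 'x \<Rightarrow> 't \<times> 'x \<Rightarrow> bool" where
  "canon_adjacent h h' \<longleftrightarrow> snd h < act (fst h') (snd h') \<and> fst h' \<noteq> 1"

lemma is_HPcanon_successively:
  assumes "is_HPcanon act w hs"
  shows "successively canon_adjacent hs"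
proof (rule successively_if_nth)
  fix i assume i: "i + 1 < length hs"
  obtain t e t' e' where h: "hs ! i = (t, e)" and h': "hs ! (i + 1) = (t', e')"
    by fastforce
  have "pstar act (hP (hs ! i)) < wplus act (hP (hs ! (i + 1)))"
    using assms i unfolding is_HPcanon_def by blast
  then have "e < act t' e'" unfolding h h' by (simp add: pstar_hP)
  moreover have "t' \<noteq> 1"
    using assms i h' pcong_hP_one unfolding is_HPcanon_def by (metis le_add2)
  ultimately show "canon_adjacent (hs ! i) (hs ! (i + 1))"
    unfolding h h' canon_adjacent_def by simp
qed

fun canon_nf :: "('t \<times> 'x) list \<Rightarrow> 't \<times> ('x \<times> 't) list" where
  "canon_nf [] = (1, [])"
| "canon_nf [(t, e)] = hP_nf t e"
| "canon_nf ((t, e) # h # hs) = (t, (e, fst (canon_nf (h # hs))) # snd (canon_nf (h # hs)))"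

lemma nf_of_canon:
  "hs \<noteq> [] \<Longrightarrow> successively canon_adjacent hs \<Longrightarrow>
   nf_of (concat (map hP hs)) = canon_nf hs \<and> reduced (snd (canon_nf hs)) \<and>
   nf_plus (canon_nf hs) = act (fst (hd hs)) (snd (hd hs)) \<and> fst (canon_nf hs) = fst (hd hs)"
proof (induction hs rule: canon_nf.induct)
  case (2 t e)
  then show ?case using nf_of_hP[of t e]
    by (auto simp: hP_nf_def top.not_eq_extremum)
next
  case (3 t e h hs)
  obtain t' xs' where c: "canon_nf (h # hs) = (t', xs')" by fastforce
  have IH: "nf_of (concat (map hP (h # hs))) = (t', xs')" "reduced xs'"
     "nf_plus (t', xs') = act (fst h) (snd h)" "t' = fst h"
    using 3 c by auto
  have lt: "e < nf_plus (t', xs')" "t' \<noteq> 1" using "3.prems"(2) IH by (simp_all add: canon_adjacent_def)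
  then have "inf e (nf_plus (t', xs')) = e" by (simp add: inf.absorb1 less_imp_le)
  then have "nf_of (concat (map hP ((t, e) # h # hs))) = (t, (e, t') # xs')"
    using IH(1) lt by (simp add: nf_of_def hP_def Let_def del: nf_plus_Cons)
  then show ?case using c IH lt by (auto simp: inf.absorb1 less_imp_le)
qed simp

end

locale good_Y_action =
  order_action act for act :: "'t::monoid_mult \<Rightarrow> 'x::bounded_semilattice_inf_top \<Rightarrow> 'x" +
  fixes Y :: "'x set"
  assumes good_Y: "good_Y act Y"
begin

lemma Y_inf: "e \<in> Y \<Longrightarrow> f \<in> Y \<Longrightarrow> inf e f \<in> Y"
  using good_Y by (simp add: good_Y_def)

lemma Y_act_downward: "e \<in> Y \<Longrightarrow> f \<in> Y \<Longrightarrow> e \<le> f \<Longrightarrow> act t f \<in> Y \<Longrightarrow> act t e \<in> Y"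
  using good_Y by (simp add: good_Y_def)

text \<open>
  \<open>Q_nf (t\<^sub>0, [(e\<^sub>1, t\<^sub>1), \<dots>, (e\<^sub>n, t\<^sub>n)])\<close> says \<open>t\<^sub>i\<^sub>-\<^sub>1 e\<^sub>i \<in> H\<^sup>Q\<close> for all \<open>i\<close>, and \<open>t\<^sub>n = t\<^sub>n top \<in> H\<^sup>Q\<close>
  unless \<open>n > 0\<close> and \<open>t\<^sub>n = 1\<close>: Y need not contain \<open>top\<close>.
\<close>
fun Q_nf :: "'t \<times> ('x \<times> 't) list \<Rightarrow> bool" where
  "Q_nf (t0, []) \<longleftrightarrow> top \<in> Y \<and> act t0 top \<in> Y"
| "Q_nf (t0, (e, u) # xs) \<longleftrightarrow> e \<in> Y \<and> act t0 e \<in> Y \<and> (xs = [] \<and> u = 1 \<or> Q_nf (u, xs))"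

lemma Q_nf_nf_plus: "reduced xs \<Longrightarrow> Q_nf (t0, xs) \<Longrightarrow> nf_plus (t0, xs) \<in> Y"
  by (cases xs) (auto simp: nf_plus_reduced_Cons simp del: nf_plus_Cons)

lemma Q_nf_foldr_hP:
  assumes red: "reduced xs" and Q: "Q_nf (t0, xs)" and e: "e \<in> Y" "act t e \<in> Y"
  shows "Q_nf (foldr nf_cons (hP (t, e)) (t0, xs))"
proof -
  define p where "p = nf_plus (t0, xs)"
  have pY: "p \<in> Y" using Q_nf_nf_plus[OF red Q] p_def by simp
  have ep: "act t (inf e p) \<in> Y"
    using Y_act_downward[OF Y_inf[OF e(1) pY] e(1) _ e(2)] by simp
  show ?thesis
  proof (cases "inf e p = p")
    case True
    then have "act t p \<in> Y" using ep by simp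
    moreover have "p = act t0 (fst (hd xs))" if "xs \<noteq> []"
      using red that nf_plus_reduced_Cons[of _ _ "tl xs" t0] unfolding p_def
      by (metis list.exhaust_sel surj_pair prod.sel(1))
    ultimately show ?thesis using True Q
      by (cases xs) (auto simp: hP_def p_def Let_def act_mult simp del: nf_plus_Cons)
  next
    case ne: False
    show ?thesis
    proof (cases "t0 = 1 \<and> xs \<noteq> []")
      case True
      then obtain e1 u1 r where xs: "xs = (e1, u1) # r" and t0: "t0 = 1"
        by (metis list.exhaust surj_pair)
      have p: "p = e1" using red nf_plus_reduced_Cons[of e1 u1 r 1] by (simp add: p_def xs t0)
      have "nf_plus (1, (e1, u1) # r) = e1" using p by (simp add: p_def xs t0 del: nf_plus_Cons)
      then show ?thesis using ne Q ep e Y_inf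
        by (simp add: hP_def Let_def xs t0 p del: nf_plus_Cons)
    next
      case False
      then show ?thesis using ne Q ep e pY Y_inf
        by (auto simp: hP_def p_def[symmetric] Let_def simp del: nf_plus_Cons)
    qed
  qed
qed

lemma Q_nf_nf_of:
  "ps \<noteq> [] \<Longrightarrow> \<forall>(t, e)\<in>set ps. e \<in> Y \<and> act t e \<in> Y \<Longrightarrow> Q_nf (nf_of (concat (map hP ps)))"
proof (induction ps)
  case (Cons h ps)
  obtain t e where h: "h = (t, e)" by fastforce
  show ?case
  proof (cases "ps = []")
    case True
    then show ?thesis using Cons.prems h nf_of_hP[of t e] by (auto simp: hP_nf_def)
  next
    case False
    obtain t0 xs where n: "nf_of (concat (map hP ps)) = (t0, xs)" by fastforce
    have "reduced xs" using reduced_nf_of[of "concat (map hP ps)"] n by simp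
    moreover have "Q_nf (t0, xs)" using Cons False n by simp
    ultimately show ?thesis
      using Q_nf_foldr_hP[of xs t0 e t] Cons.prems n by (simp add: h nf_of_def)
  qed
qed simp

lemma Q_nf_canon_nf:
  "successively canon_adjacent hs \<Longrightarrow> Q_nf (canon_nf hs) \<Longrightarrow> \<forall>(t, e)\<in>set hs. e \<in> Y \<and> act t e \<in> Y"
proof (induction hs rule: canon_nf.induct)
  case (2 t e)
  then show ?case by (cases "e = top") (auto simp: hP_nf_def)
next
  case (3 t e h hs)
  have "fst (canon_nf (h # hs)) = fst h" "fst h \<noteq> 1"
    using 3 nf_of_canon[of "h # hs"] by (simp_all add: canon_adjacent_def)
  then have "e \<in> Y \<and> act t e \<in> Y \<and> Q_nf (canon_nf (h # hs))"
    using "3.prems"(2) by (cases "canon_nf (h # hs)") auto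
  then show ?case using 3 by simp
qed simp

lemma Q_nf_if_inQ:
  assumes "inQ act Y w"
  shows "Q_nf (nf_of w)"
proof -
  obtain ps where "ps \<noteq> []" "\<forall>(t, e)\<in>set ps. e \<in> Y \<and> act t e \<in> Y"
    and "pcong act w (concat (map hP ps))"
    using assms unfolding inQ_def by blast
  then show ?thesis using Q_nf_nf_of nf_of_pcong by simp
qed

lemma inQ_hP_imp: "inQ act Y (hP (t, e)) \<Longrightarrow> e \<in> Y \<and> act t e \<in> Y"
  using Q_nf_if_inQ[of "hP (t, e)"] by (cases "e = top") (auto simp: nf_of_hP hP_nf_def)

lemma canonical_factors_inHQ:
  assumes Q: "inQ act Y w" and canon: "is_HPcanon act w hs"
  shows "\<forall>h\<in>set hs. inHQ act Y (hP h)"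
proof -
  have "nf_of w = nf_of (concat (map hP hs))"
    using canon unfolding is_HPcanon_def by (auto dest: nf_of_pcong)
  also have "\<dots> = canon_nf hs"
    using canon nf_of_canon is_HPcanon_successively unfolding is_HPcanon_def by blast
  finally have "nf_of w = canon_nf hs" .
  then have "\<forall>(t, e)\<in>set hs. e \<in> Y \<and> act t e \<in> Y"
    using Q_nf_if_inQ[OF Q] Q_nf_canon_nf is_HPcanon_successively[OF canon] by simp
  then show ?thesis unfolding inHQ_def using pcong.refl by fastforce
qed

lemma inQ_hP_iff_inHQ: "inQ act Y (hP (t, e)) \<longleftrightarrow> inHQ act Y (hP (t, e))"
proof
  assume "inQ act Y (hP (t, e))"
  then show "inHQ act Y (hP (t, e))"
    using inQ_hP_imp pcong.refl unfolding inHQ_def by blast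
next
  assume "inHQ act Y (hP (t, e))"
  then obtain t' e' where "e' \<in> Y" "act t' e' \<in> Y" "pcong act (hP (t, e)) (hP (t', e'))"
    unfolding inHQ_def by blast
  then show "inQ act Y (hP (t, e))"
    unfolding inQ_def by (intro exI[of _ "[(t', e')]"]) simp
qed

lemma inQ_projection_iff: "inQ act Y [Inr f] \<longleftrightarrow> (\<exists>g\<in>Y. pcong act [Inr f] [Inr g])"
proof
  assume "inQ act Y [Inr f]"
  then have "inQ act Y (hP (1, f))"
    using pcong.trans[OF pcong_hP_one] unfolding inQ_def by blast
  then show "\<exists>g\<in>Y. pcong act [Inr f] [Inr g]"
    using inQ_hP_imp pcong.refl by blast
next
  assume "\<exists>g\<in>Y. pcong act [Inr f] [Inr g]"
  then obtain g where g: "g \<in> Y" and fg: "pcong act [Inr f] [Inr g]" by blast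
  have "pcong act [Inr f] (hP (1, g))"
    using pcong.trans[OF fg pcong.sym[OF pcong_hP_one]] .
  then show "inQ act Y [Inr f]"
    using g unfolding inQ_def by (intro exI[of _ "[(1, g)]"]) simp
qed

end

theorem mainTheorem15:
  fixes act :: "'t::monoid_mult \<Rightarrow> 'x::bounded_semilattice_inf_top \<Rightarrow> 'x"
    and Y :: "'x set"
  assumes "is_action act"
    and "good_Y act Y"
  shows "(\<forall>w hs. inQ act Y w \<longrightarrow> is_HPcanon act w hs \<longrightarrow> (\<forall>h\<in>set hs. inHQ act Y (hP h)))
       \<and> (\<forall>t e. inQ act Y (hP (t, e)) \<longleftrightarrow> inHQ act Y (hP (t, e)))
       \<and> (\<forall>f. inQ act Y [Inr f] \<longleftrightarrow> (\<exists>g\<in>Y. pcong act [Inr f] [Inr g]))"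
proof -
  interpret good_Y_action act Y
    using assms by unfold_locales
  show ?thesis
    using canonical_factors_inHQ inQ_hP_iff_inHQ inQ_projection_iff by blast
qed

end
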